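(* Let $d\in\{1,2\}$, $\nu>0$, $\mu>0$, $\gamma>0$. Then both sequences $(\alpha_k^{(\nu,\gamma)})_{k\ge0}$ and $(c_n^{(\nu,\mu)})_{n\ge0}$ are Hausdorff moment sequences, i.e. each is of the form $s_n=\int_0^1x^n\,d\rho(x)$, $n=0,1,\dots$, for some positive measure $\rho$ on $[0,1]$.
   Context: $\alpha_k^{(\nu,\gamma)}=\frac{\Gamma(k+\frac d2)}{k!\,\Gamma(\frac d2)\Gamma(\nu)}\gamma^{2k}\int_0^{\infty}e^{-a}a^{\nu+\frac d2-1}(a+\gamma^2)^{-k-\frac d2}\,da$ and $c_n^{(\nu,\mu)}=\frac{1}{B(\nu,\mu)}\frac{(\frac d2)_n}{n!}\int_0^1 t^{\mu+\frac d2-1}(1-t)^{\nu+\frac d2-1}(1-t+t^2)^n\,dt$, where $B$ is the Beta function and $(a)_n$ the Pochhammer symbol. *)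

theory Defs
  imports "HOL-Analysis.Analysis"
begin

text \<open>alpha_k^{(nu,gamma)} in dimension d (improper integral over (0,infinity) taken as Lebesgue integral).\<close>
definition alpha_seq :: "nat \<Rightarrow> real \<Rightarrow> real \<Rightarrow> nat \<Rightarrow> real" where
  "alpha_seq d \<nu> \<gamma> k =
     Gamma (real k + real d / 2) / (fact k * Gamma (real d / 2) * Gamma \<nu>) * \<gamma> ^ (2 * k) *
     (LBINT a:{0<..}. exp (- a) * a powr (\<nu> + real d / 2 - 1) *
                      (a + \<gamma>\<^sup>2) powr (- (real k + real d / 2)))"

definition c_seq :: "nat \<Rightarrow> real \<Rightarrow> real \<Rightarrow> nat \<Rightarrow> real" where
  "c_seq d \<nu> \<mu> n =
     1 / Beta \<nu> \<mu> * (pochhammer (real d / 2) n / fact n) *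
     (LBINT t=0..1. t powr (\<mu> + real d / 2 - 1) * (1 - t) powr (\<nu> + real d / 2 - 1) *
                    (1 - t + t\<^sup>2) ^ n)"

definition hausdorff_moment_seq :: "(nat \<Rightarrow> real) \<Rightarrow> bool" where
  "hausdorff_moment_seq s \<longleftrightarrow>
     (\<exists>\<rho> :: real measure. sets \<rho> = sets borel \<and> finite_measure \<rho> \<and>
        emeasure \<rho> (- {0..1}) = 0 \<and>
        (\<forall>n. s n = (\<integral>x. x ^ n \<partial>\<rho>)))"

end

theory Submission
  imports Defs
begin

text \<open>
  Hausdorff moment sequences are closed under pointwise products (push the product measure
  forward along (x, y) \<mapsto> x y), and n \<mapsto> \<integral> w f^n dM is one whenever w \<ge> 0 is integrable
  and 0 \<le> f \<le> 1 where w \<noteq> 0 (push the measure w M forward along f).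
  For 0 < a \<le> 1 the numbers (a)_n / n! = B(n + a, 1 - a) / B(a, 1 - a) are the moments of a
  Beta distribution; this covers the factor \<Gamma>(k + d/2) / (k! \<Gamma>(d/2)) = (d/2)_k / k!.
  The remaining factors are of the form \<integral> w f^n dM, with f = \<gamma>^2 / (a + \<gamma>^2) on (0, \<infinity>) since
  \<gamma>^(2k) (a + \<gamma>^2)^(-k - d/2) = (a + \<gamma>^2)^(-d/2) (\<gamma>^2 / (a + \<gamma>^2))^k, and with
  f = 1 - t + t^2 on [0, 1].
\<close>

lemma hausdorff_moment_seq_weighted:
  fixes M :: "'a measure" and f w :: "'a \<Rightarrow> real" and s :: "nat \<Rightarrow> real"
  assumes f: "f \<in> borel_measurable M" and w: "w \<in> borel_measurable M"
    and w_nonneg: "\<And>x. x \<in> space M \<Longrightarrow> 0 \<le> w x"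
    and w_integrable: "integrable M w"
    and f_range: "\<And>x. x \<in> space M \<Longrightarrow> w x \<noteq> 0 \<Longrightarrow> f x \<in> {0..1}"
    and s: "\<And>n. s n = (\<integral>x. w x * f x ^ n \<partial>M)"
  shows "hausdorff_moment_seq s"
  unfolding hausdorff_moment_seq_def
proof (intro exI conjI allI)
  \<comment> \<open>\<open>f\<close> is only constrained where \<open>w \<noteq> 0\<close>, so it is sent to 0 elsewhere before pushing forward\<close>
  define g where "g x = (if w x = 0 then 0 else f x)" for x
  have g: "g \<in> borel_measurable M"
    unfolding g_def using f w by measurable
  let ?\<rho> = "distr (density M (\<lambda>x. ennreal (w x))) borel g"
  show "sets ?\<rho> = sets borel" by simp
  have "emeasure ?\<rho> (space ?\<rho>) = (\<integral>\<^sup>+x. ennreal (w x) \<partial>M)"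
    using g w by (simp add: emeasure_distr emeasure_density nn_integral_set_ennreal)
  then show "finite_measure ?\<rho>"
    using integrableD(2)[OF w_integrable] by (intro finite_measureI) simp
  have "g -` (- {0..1}) \<inter> space M = {}"
    using f_range by (auto simp: g_def split: if_splits)
  then show "emeasure ?\<rho> (- {0..1}) = 0"
    using g by (simp add: emeasure_distr)
  fix n
  have "(\<integral>x. x ^ n \<partial>?\<rho>) = (\<integral>x. g x ^ n \<partial>density M (\<lambda>x. ennreal (w x)))"
    using g by (intro integral_distr) auto
  also have "\<dots> = (\<integral>x. w x * g x ^ n \<partial>M)"
    using g w w_nonneg by (intro integral_real_density) (auto intro!: AE_I2)
  also have "\<dots> = s n"
    unfolding s g_def by (intro Bochner_Integration.integral_cong) auto
  finally show "s n = (\<integral>x. x ^ n \<partial>?\<rho>)" ..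
qed

lemma hausdorff_moment_seq_const:
  assumes "c \<ge> 0"
  shows "hausdorff_moment_seq (\<lambda>n. c)"
proof (rule hausdorff_moment_seq_weighted[where M=lborel and w="\<lambda>x. c * indicator {0..1::real} x"
      and f="\<lambda>_. 1"])
  show "integrable lborel (\<lambda>x. c * indicator {0..1::real} x)"
    by (intro integrable_mult_right integrable_real_indicator) auto
qed (use assms in auto)

lemma integral_indicator_unit_interval:
  fixes \<rho> :: "real measure"
  assumes "sets \<rho> = sets borel" and "emeasure \<rho> (- {0..1}) = 0"
  shows "(\<integral>x. indicator {0..1} x * x ^ n \<partial>\<rho>) = (\<integral>x. x ^ n \<partial>\<rho>)"
proof (rule integral_cong_AE)
  have "- {0..1} \<in> sets \<rho>"
    unfolding assms(1) by auto
  then have "AE x in \<rho>. x \<in> {0..1}"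
    using assms(2) by (intro AE_I[of _ _ "- {0..1}"]) auto
  then show "AE x in \<rho>. indicator {0..1} x * x ^ n = x ^ n"
    by eventually_elim simp
qed (simp_all add: measurable_cong_sets[OF assms(1) refl])

lemma integral_unit_square_product_power:
  fixes \<rho>1 \<rho>2 :: "real measure"
  assumes "finite_measure \<rho>1" "finite_measure \<rho>2"
    and "sets \<rho>1 = sets borel" "sets \<rho>2 = sets borel"
  shows "(\<integral>z. indicator ({0..1} \<times> {0..1}) z * (fst z * snd z) ^ n \<partial>(\<rho>1 \<Otimes>\<^sub>M \<rho>2))
    = (\<integral>x. indicator {0..1} x * x ^ n \<partial>\<rho>1) * (\<integral>y. indicator {0..1} y * y ^ n \<partial>\<rho>2)"
proof -
  interpret \<rho>1: finite_measure \<rho>1 by fact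
  interpret \<rho>2: finite_measure \<rho>2 by fact
  interpret P: pair_sigma_finite \<rho>1 \<rho>2 ..
  interpret P: finite_measure "\<rho>1 \<Otimes>\<^sub>M \<rho>2"
    by (rule finite_measure_pair_measure) fact+
  define h :: "real \<Rightarrow> real" where "h x = indicator {0..1} x * x ^ n" for x
  have integrand_eq: "indicator ({0..1} \<times> {0..1}) z * (fst z * snd z) ^ n = h (fst z) * h (snd z)" for z :: "real \<times> real"
    by (simp add: h_def indicator_times power_mult_distrib mult_ac)
  have "integrable (\<rho>1 \<Otimes>\<^sub>M \<rho>2) (\<lambda>z. h (fst z) * h (snd z))"
  proof (rule P.integrable_const_bound[where B=1])
    show "AE z in \<rho>1 \<Otimes>\<^sub>M \<rho>2. norm (h (fst z) * h (snd z)) \<le> 1"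
      by (intro AE_I2) (auto simp: h_def indicator_def abs_mult power_abs intro!: power_le_one mult_le_one)
    show "(\<lambda>z. h (fst z) * h (snd z)) \<in> borel_measurable (\<rho>1 \<Otimes>\<^sub>M \<rho>2)"
      unfolding measurable_cong_sets[OF sets_pair_measure_cong[OF assms(3,4)] refl] h_def by measurable
  qed
  from P.integral_fst'[OF this] show ?thesis
    unfolding integrand_eq h_def[symmetric] by simp
qed

lemma hausdorff_moment_seq_mult:
  assumes "hausdorff_moment_seq s" and "hausdorff_moment_seq t"
  shows "hausdorff_moment_seq (\<lambda>n. s n * t n)"
proof -
  obtain \<rho>1 where \<rho>1: "sets \<rho>1 = sets borel" "finite_measure \<rho>1" "emeasure \<rho>1 (- {0..1}) = 0"
    and s: "\<And>n. s n = (\<integral>x. x ^ n \<partial>\<rho>1)"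
    using assms(1) unfolding hausdorff_moment_seq_def by blast
  obtain \<rho>2 where \<rho>2: "sets \<rho>2 = sets borel" "finite_measure \<rho>2" "emeasure \<rho>2 (- {0..1}) = 0"
    and t: "\<And>n. t n = (\<integral>x. x ^ n \<partial>\<rho>2)"
    using assms(2) unfolding hausdorff_moment_seq_def by blast
  interpret P: finite_measure "\<rho>1 \<Otimes>\<^sub>M \<rho>2"
    by (rule finite_measure_pair_measure) fact+
  note measurable_P = measurable_cong_sets[OF sets_pair_measure_cong[OF \<rho>1(1) \<rho>2(1)] refl]
  show ?thesis
  proof (rule hausdorff_moment_seq_weighted[where M="\<rho>1 \<Otimes>\<^sub>M \<rho>2"
        and w="indicator ({0..1} \<times> {0..1})" and f="\<lambda>z. fst z * snd z"])
    show "integrable (\<rho>1 \<Otimes>\<^sub>M \<rho>2) (indicator ({0..1} \<times> {0..1}) :: real \<times> real \<Rightarrow> real)"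
    proof (rule P.integrable_const_bound[where B=1])
      show "indicator ({0..1} \<times> {0..1}) \<in> borel_measurable (\<rho>1 \<Otimes>\<^sub>M \<rho>2)"
        unfolding measurable_P by measurable
    qed (simp add: indicator_def)
    show "fst z * snd z \<in> {0..1}" if "indicator ({0..1} \<times> {0..1}) z \<noteq> (0::real)" for z :: "real \<times> real"
      using that by (auto simp: indicator_def mult_le_one split: if_splits)
    show "s n * t n = (\<integral>z. indicator ({0..1} \<times> {0..1}) z * (fst z * snd z) ^ n \<partial>(\<rho>1 \<Otimes>\<^sub>M \<rho>2))" for n
      using \<rho>1 \<rho>2 by (simp add: s t integral_unit_square_product_power integral_indicator_unit_interval)
  qed (simp_all add: measurable_P)
qed

corollary hausdorff_moment_seq_scale:
  assumes "hausdorff_moment_seq s" and "c \<ge> 0"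
  shows "hausdorff_moment_seq (\<lambda>n. c * s n)"
  using hausdorff_moment_seq_mult[OF hausdorff_moment_seq_const[OF assms(2)] assms(1)] .

lemma interval_integral_zero_one:
  fixes f :: "real \<Rightarrow> real"
  shows "(LBINT t=0..1. f t) = (\<integral>t. indicator {0..1} t * f t \<partial>lborel)"
  using interval_integral_Icc[of "0::real" 1 f]
  by (simp add: zero_ereal_def one_ereal_def set_lebesgue_integral_def)

lemma hausdorff_moment_seq_Beta_weighted:
  fixes a b :: real and f :: "real \<Rightarrow> real"
  assumes "a > 0" and "b > 0" and f: "f \<in> borel_measurable borel"
    and f_range: "\<And>t. t \<in> {0..1} \<Longrightarrow> f t \<in> {0..1}"
  shows "hausdorff_moment_seq (\<lambda>n. LBINT t=0..1. t powr (a - 1) * (1 - t) powr (b - 1) * f t ^ n)"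
proof (rule hausdorff_moment_seq_weighted[where M=lborel and f=f
      and w="\<lambda>t. indicator {0..1} t * (t powr (a - 1) * (1 - t) powr (b - 1))"])
  show "integrable lborel (\<lambda>t. indicator {0..1} t * (t powr (a - 1) * (1 - t) powr (b - 1)))"
    using integrable_Beta[OF assms(1,2)] by (simp add: set_integrable_def)
  show "indicator {0..1} t * (t powr (a - 1) * (1 - t) powr (b - 1)) \<noteq> 0 \<Longrightarrow> f t \<in> {0..1}" for t
    using f_range by (auto simp: indicator_def split: if_splits)
  fix n
  show "(LBINT t=0..1. t powr (a - 1) * (1 - t) powr (b - 1) * f t ^ n)
      = (\<integral>t. indicator {0..1} t * (t powr (a - 1) * (1 - t) powr (b - 1)) * f t ^ n \<partial>lborel)"
    by (simp add: interval_integral_zero_one mult.assoc)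
qed (use f in auto)

lemma Beta_moment:
  fixes a b :: real
  assumes "a > 0" and "b > 0"
  shows "(LBINT t=0..1. t powr (a - 1) * (1 - t) powr (b - 1) * t ^ n) = Beta (real n + a) b"
proof -
  have "(LBINT t=0..1. t powr (a - 1) * (1 - t) powr (b - 1) * t ^ n)
      = (LBINT t:{0..1}. t powr ((real n + a) - 1) * (1 - t) powr (b - 1))"
    unfolding interval_integral_zero_one set_lebesgue_integral_def
  proof (intro Bochner_Integration.integral_cong refl)
    fix t :: real
    show "indicator {0..1} t * (t powr (a - 1) * (1 - t) powr (b - 1) * t ^ n)
        = indicator {0..1} t *\<^sub>R (t powr (real n + a - 1) * (1 - t) powr (b - 1))"
      by (cases "t \<in> {0<..1}") (auto simp: indicator_def powr_add[symmetric] powr_realpow[symmetric] algebra_simps)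
  qed
  also have "\<dots> = Beta (real n + a) b"
    using assms set_borel_integral_eq_integral(2)[OF integrable_Beta[of "real n + a" b]]
      integral_unique[OF has_integral_Beta_real[of "real n + a" b]] by simp
  finally show ?thesis .
qed

lemma pochhammer_div_fact_eq_Beta:
  fixes a :: real
  assumes "0 < a" and "a < 1"
  shows "pochhammer a n / fact n = Beta (real n + a) (1 - a) / Beta a (1 - a)"
proof -
  have "a \<notin> \<int>\<^sub>\<le>\<^sub>0"
    using assms nonpos_Ints_nonpos by fastforce
  then have pochhammer: "pochhammer a n = Gamma (real n + a) / Gamma a"
    by (simp add: pochhammer_Gamma add.commute)
  have fact: "fact n = Gamma (real n + 1)"
    using Gamma_fact[where 'a=real, of n] by (simp add: add.commute)
  have "Gamma a > 0" "Gamma (1 - a) > 0" "Gamma (real n + 1) > 0"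
    using assms by (simp_all add: Gamma_real_pos)
  then show ?thesis
    unfolding pochhammer fact Beta_def by (simp add: field_simps)
qed

lemma hausdorff_moment_seq_pochhammer:
  fixes a :: real
  assumes "0 < a" and "a \<le> 1"
  shows "hausdorff_moment_seq (\<lambda>n. pochhammer a n / fact n)"
proof (cases "a = 1")
  case True
  then show ?thesis
    using hausdorff_moment_seq_const[of 1] by (simp add: pochhammer_fact[symmetric])
next
  case False
  with assms have a: "0 < a" "a < 1" by auto
  have "hausdorff_moment_seq (\<lambda>n. 1 / Beta a (1 - a) *
      (LBINT t=0..1. t powr (a - 1) * (1 - t) powr ((1 - a) - 1) * t ^ n))"
    using a by (intro hausdorff_moment_seq_scale hausdorff_moment_seq_Beta_weighted)
      (auto simp: Beta_def Gamma_real_pos less_imp_le)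
  then show ?thesis
    unfolding Beta_moment[OF a(1) diff_gt_0_iff_gt[THEN iffD2, OF a(2)]]
    using a by (simp add: pochhammer_div_fact_eq_Beta)
qed

lemma set_integrable_Gamma_integrand:
  assumes "s > (0::real)"
  shows "set_integrable lborel {0<..} (\<lambda>t. t powr (s - 1) / exp t)"
proof -
  have "(\<lambda>t. t powr (s - 1) / exp t) absolutely_integrable_on {0..}"
    using has_integral_integrable[OF Gamma_integral_real[OF assms]]
    by (intro nonnegative_absolutely_integrable_1) auto
  then have "set_integrable lborel {0..} (\<lambda>t. t powr (s - 1) / exp t)"
    unfolding set_integrable_def by (subst (asm) integrable_completion) auto
  then show ?thesis
    by (rule set_integrable_subset) auto
qed

lemma hausdorff_moment_seq_Gamma_weighted:
  fixes p x \<gamma> :: real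
  assumes p: "p > 0" and x: "x \<ge> 0" and \<gamma>: "\<gamma> \<noteq> 0"
  shows "hausdorff_moment_seq (\<lambda>k. \<gamma> ^ (2 * k) *
     (LBINT a:{0<..}. exp (- a) * a powr (p - 1) * (a + \<gamma>\<^sup>2) powr (- (real k + x))))"
proof (rule hausdorff_moment_seq_weighted[where M=lborel and f="\<lambda>a. \<gamma>\<^sup>2 / (a + \<gamma>\<^sup>2)"
      and w="\<lambda>a. indicator {0<..} a * (exp (- a) * a powr (p - 1) * (a + \<gamma>\<^sup>2) powr (- x))"])
  have \<gamma>2: "\<gamma>\<^sup>2 > 0"
    using \<gamma> by simp
  show "\<gamma>\<^sup>2 / (a + \<gamma>\<^sup>2) \<in> {0..1}"
    if "indicator {0<..} a * (exp (- a) * a powr (p - 1) * (a + \<gamma>\<^sup>2) powr (- x)) \<noteq> 0" for a :: real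
  proof -
    have "a > 0"
      using that by (auto simp: indicator_def split: if_splits)
    then have "\<gamma>\<^sup>2 \<le> a + \<gamma>\<^sup>2" and "a + \<gamma>\<^sup>2 > 0"
      using \<gamma>2 by linarith+
    then show ?thesis
      by (auto simp: divide_le_eq)
  qed
  have bound: "indicator {0<..} a * (exp (- a) * a powr (p - 1) * (a + \<gamma>\<^sup>2) powr (- x))
      \<le> \<gamma>\<^sup>2 powr (- x) * (indicator {0<..} a *\<^sub>R (a powr (p - 1) / exp a))" for a :: real
  proof (cases "a > 0")
    case True
    then have "(a + \<gamma>\<^sup>2) powr (- x) \<le> \<gamma>\<^sup>2 powr (- x)"
      using \<gamma>2 x by (intro powr_mono2') auto
    then have "a powr (p - 1) / exp a * (a + \<gamma>\<^sup>2) powr (- x) \<le> a powr (p - 1) / exp a * \<gamma>\<^sup>2 powr (- x)"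
      by (intro mult_left_mono) auto
    with True show ?thesis
      by (simp add: exp_minus field_simps)
  qed simp
  show "integrable lborel (\<lambda>a. indicator {0<..} a * (exp (- a) * a powr (p - 1) * (a + \<gamma>\<^sup>2) powr (- x)))"
  proof (rule Bochner_Integration.integrable_bound)
    show "integrable lborel (\<lambda>a. \<gamma>\<^sup>2 powr (- x) * (indicator {0<..} a *\<^sub>R (a powr (p - 1) / exp a)))"
      using set_integrable_Gamma_integrand[OF p] unfolding set_integrable_def
      by (rule integrable_mult_right)
    show "AE a in lborel. norm (indicator {0<..} a * (exp (- a) * a powr (p - 1) * (a + \<gamma>\<^sup>2) powr (- x)))
        \<le> norm (\<gamma>\<^sup>2 powr (- x) * (indicator {0<..} a *\<^sub>R (a powr (p - 1) / exp a)))"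
      using bound by (intro AE_I2) (simp add: indicator_def)
  qed measurable
  fix k
  have power_factor: "\<gamma> ^ (2 * k) * (exp (- a) * a powr (p - 1) * (a + \<gamma>\<^sup>2) powr (- (real k + x)))
      = exp (- a) * a powr (p - 1) * (a + \<gamma>\<^sup>2) powr (- x) * (\<gamma>\<^sup>2 / (a + \<gamma>\<^sup>2)) ^ k"
    if "a > 0" for a :: real
  proof -
    have "a + \<gamma>\<^sup>2 > 0"
      using that \<gamma>2 by linarith
    then have "(a + \<gamma>\<^sup>2) powr (- (real k + x)) = (a + \<gamma>\<^sup>2) powr (- x) / (a + \<gamma>\<^sup>2) ^ k"
      by (simp add: powr_diff powr_realpow[symmetric] diff_conv_add_uminus[symmetric] add.commute)
    then show ?thesis
      by (simp add: power_mult power_divide)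
  qed
  show "\<gamma> ^ (2 * k) * (LBINT a:{0<..}. exp (- a) * a powr (p - 1) * (a + \<gamma>\<^sup>2) powr (- (real k + x)))
      = (\<integral>a. indicator {0<..} a * (exp (- a) * a powr (p - 1) * (a + \<gamma>\<^sup>2) powr (- x))
            * (\<gamma>\<^sup>2 / (a + \<gamma>\<^sup>2)) ^ k \<partial>lborel)"
    unfolding set_lebesgue_integral_def integral_mult_right_zero[symmetric]
  proof (intro Bochner_Integration.integral_cong refl)
    fix a :: real
    show "\<gamma> ^ (2 * k) * (indicator {0<..} a *\<^sub>R (exp (- a) * a powr (p - 1) * (a + \<gamma>\<^sup>2) powr (- (real k + x))))
        = indicator {0<..} a * (exp (- a) * a powr (p - 1) * (a + \<gamma>\<^sup>2) powr (- x)) * (\<gamma>\<^sup>2 / (a + \<gamma>\<^sup>2)) ^ k"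
      using power_factor[of a] by (cases "a > 0") (simp_all add: indicator_def mult_ac)
  qed
qed (simp_all add: indicator_def)

theorem theorem6:
  fixes d :: nat and \<nu> \<mu> \<gamma> :: real
  assumes "d \<in> {1, 2}" and "\<nu> > 0" and "\<mu> > 0" and "\<gamma> > 0"
  shows "hausdorff_moment_seq (alpha_seq d \<nu> \<gamma>) \<and> hausdorff_moment_seq (c_seq d \<nu> \<mu>)"
proof
  have d: "0 < real d / 2" "real d / 2 \<le> 1"
    using assms(1) by auto
  then have "real d / 2 \<notin> \<int>\<^sub>\<le>\<^sub>0"
    using nonpos_Ints_nonpos by fastforce
  then have alpha: "alpha_seq d \<nu> \<gamma> = (\<lambda>k. pochhammer (real d / 2) k / fact k * (1 / Gamma \<nu> * (\<gamma> ^ (2 * k) *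
      (LBINT a:{0<..}. exp (- a) * a powr (\<nu> + real d / 2 - 1) * (a + \<gamma>\<^sup>2) powr (- (real k + real d / 2))))))"
    by (intro ext) (simp add: alpha_seq_def pochhammer_Gamma add.commute mult_ac)
  have c: "c_seq d \<nu> \<mu> = (\<lambda>n. pochhammer (real d / 2) n / fact n * (1 / Beta \<nu> \<mu> *
      (LBINT t=0..1. t powr (\<mu> + real d / 2 - 1) * (1 - t) powr (\<nu> + real d / 2 - 1) * (1 - t + t\<^sup>2) ^ n)))"
    by (intro ext) (simp add: c_seq_def)
  have "t\<^sup>2 \<le> t" if "t \<in> {0..1}" for t :: real
    using that by (simp add: power2_eq_square mult_left_le)
  then have c_integral: "hausdorff_moment_seq (\<lambda>n.
      LBINT t=0..1. t powr (\<mu> + real d / 2 - 1) * (1 - t) powr (\<nu> + real d / 2 - 1) * (1 - t + t\<^sup>2) ^ n)"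
    using assms d by (intro hausdorff_moment_seq_Beta_weighted) auto
  have alpha_integral: "hausdorff_moment_seq (\<lambda>k. \<gamma> ^ (2 * k) *
      (LBINT a:{0<..}. exp (- a) * a powr (\<nu> + real d / 2 - 1) * (a + \<gamma>\<^sup>2) powr (- (real k + real d / 2))))"
    using assms d by (intro hausdorff_moment_seq_Gamma_weighted) auto
  have "1 / Gamma \<nu> \<ge> 0" "1 / Beta \<nu> \<mu> \<ge> 0"
    using assms by (simp_all add: Gamma_real_pos Beta_def less_imp_le)
  note pochhammer = hausdorff_moment_seq_pochhammer[OF d]
  show "hausdorff_moment_seq (alpha_seq d \<nu> \<gamma>)"
    unfolding alpha
    by (rule hausdorff_moment_seq_mult[OF pochhammer hausdorff_moment_seq_scale[OF alpha_integral]]) fact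
  show "hausdorff_moment_seq (c_seq d \<nu> \<mu>)"
    unfolding c
    by (rule hausdorff_moment_seq_mult[OF pochhammer hausdorff_moment_seq_scale[OF c_integral]]) fact
qed

end
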